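(* Let $H\in(\tfrac12,1)$, $W$ a one-dimensional standard Wiener process, $\tilde B_t=\int_0^t(t-v)^{H-1/2}\,dW_v$, and $R(r,s)=\mathbb{E}\tilde B_r\tilde B_s$. Set $c_1=H-\tfrac12$, $c_3=(H-\tfrac12)(H-\tfrac32)$ and $c_2=-c_3\int_0^\infty u^{H-1/2}(1+u)^{H-5/2}\,du$. Then for $0<r<s$, $$\partial^2_{r,s}R(r,s)=c_1r^{H-1/2}s^{H-3/2}+c_2(s-r)^{2H-2}+c_3\int_r^\infty v^{H-1/2}(s-r+v)^{H-5/2}\,dv.$$
   Context: $\partial^2_{r,s}R=\frac{\partial^2}{\partial r\partial s}R$ denotes the mixed derivative of the covariance function. *)

theory Defs
  imports "HOL-Analysis.Analysis"
begin

text \<open>Covariance of the Riemann-Liouville process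
  B_t = int_0^t (t-v)^(H-1/2) dW_v. By the Ito isometry,
  E[B_r B_s] = int_0^(min r s) (r-v)^(H-1/2) (s-v)^(H-1/2) dv.\<close>
definition RLcov :: "real \<Rightarrow> real \<Rightarrow> real \<Rightarrow> real" where
  "RLcov H r s = (LBINT v:{0..min r s}. (r - v) powr (H - 1/2) * (s - v) powr (H - 1/2))"

end

theory Submission
  imports Defs
begin

text \<open>Write a = H - 1/2, so that R(r,s) = int_0^r (r-v)^a (s-v)^a dv for r \<le> s.
  Differentiating in s under the integral sign and substituting v = r t gives
  d/ds R = a int_0^1 r^(a+1) (1-t)^a (s-rt)^(a-1) dt. In this form the singularity of
  (r-v)^(a-1) at the moving endpoint has disappeared and the integrand is smooth in r < s,
  so it can be differentiated in r under the integral sign again. An integration by parts in t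
  splits off the boundary term r^a s^(a-1); undoing the substitution turns the remaining
  integral into int_0^r u^a (s-r+u)^(a-2) du, which is the integral over (0,\<infinity>) minus the
  tail over (r,\<infinity>). Scaling u = (s-r) w in the former produces (s-r)^(2a-1) times the
  constant in c2; it converges because a < 1/2.\<close>

lemma integral_reflect_atLeastAtMost:
  fixes f :: "real \<Rightarrow> 'b::real_normed_vector"
  shows "integral {a..b} (\<lambda>w. f (a + b - w)) = integral {a..b} f"
  using integral_shift_real_ivl[of "-b" "-(a+b)" "-a" "\<lambda>y. f (- y)"] by (simp add: algebra_simps)

lemma integral_rescale_unit_interval:
  fixes f :: "real \<Rightarrow> real"
  assumes "continuous_on {0..x} f" "0 < x"
  shows "integral {0..1} (\<lambda>t. x * f (x * t)) = integral {0..x} f"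
proof -
  have "((\<lambda>t. x *\<^sub>R f (x * t)) has_integral integral {x * 0..x * 1} f) {0..1}"
  proof (rule has_integral_substitution[where c = 0 and d = x])
    show "(\<lambda>t. x * t) ` {0..1} \<subseteq> {0..x}"
      using assms(2) by (auto simp: mult_le_cancel_left1)
  qed (use assms in \<open>auto intro!: derivative_eq_intros\<close>)
  then show ?thesis
    by (simp add: integral_unique del: integral_mult_right)
qed

lemma integral_powr_kernel_rescale:
  fixes a b x s :: real
  assumes a: "0 < a" and x: "0 < x" "x < s"
  shows "integral {0..x} (\<lambda>v. (x - v) powr a * (s - v) powr b) =
    integral {0..1} (\<lambda>t. x powr (a + 1) * (1 - t) powr a * (s - x * t) powr b)"
proof -
  have "continuous_on {0..x} (\<lambda>v. (x - v) powr a * (s - v) powr b)"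
    using a x by (intro continuous_intros continuous_on_powr') auto
  then have "integral {0..x} (\<lambda>v. (x - v) powr a * (s - v) powr b) =
      integral {0..1} (\<lambda>t. x * ((x - x * t) powr a * (s - x * t) powr b))"
    by (rule integral_rescale_unit_interval[OF _ x(1), symmetric])
  also have "\<dots> = integral {0..1} (\<lambda>t. x powr (a + 1) * (1 - t) powr a * (s - x * t) powr b)"
  proof (rule integral_cong)
    fix t :: real assume "t \<in> {0..1}"
    then have "(x - x * t) powr a = x powr a * (1 - t) powr a"
      using x by (simp add: powr_mult[symmetric] algebra_simps)
    then show "x * ((x - x * t) powr a * (s - x * t) powr b) =
        x powr (a + 1) * (1 - t) powr a * (s - x * t) powr b"
      using x by (simp add: powr_add)
  qed
  finally show ?thesis .
qed

lemma set_integrable_powr_kernel_tail: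
  fixes a d x :: real
  assumes a: "0 < a" "a < 1/2" and d: "0 \<le> d" and x: "0 < x"
  shows "set_integrable lborel {x..} (\<lambda>u. u powr a * (d + u) powr (a - 2))"
proof (rule set_integrable_bound)
  have "(\<lambda>u. u powr (2*a - 2)) integrable_on {x..}"
    using has_integral_powr_to_inf[of "2*a - 2" x] a x by (auto simp: integrable_on_def)
  then have "(\<lambda>u. u powr (2*a - 2)) absolutely_integrable_on {x..}"
    by (intro nonnegative_absolutely_integrable_1) auto
  then have "integrable lebesgue (\<lambda>u. indicator {x..} u *\<^sub>R u powr (2*a - 2))"
    by (simp add: set_integrable_def)
  then show "set_integrable lborel {x..} (\<lambda>u. u powr (2*a - 2))"
    unfolding set_integrable_def by (subst (asm) integrable_completion) measurable
  show "set_borel_measurable lborel {x..} (\<lambda>u. u powr a * (d + u) powr (a - 2))"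
    unfolding set_borel_measurable_def by measurable
  show "AE u in lborel. u \<in> {x..} \<longrightarrow> norm (u powr a * (d + u) powr (a - 2)) \<le> norm (u powr (2*a - 2))"
  proof (rule AE_I2, intro impI)
    fix u assume "u \<in> {x..}"
    then have u: "0 < u" using x by auto
    have "u powr a * (d + u) powr (a - 2) \<le> u powr a * u powr (a - 2)"
      using a d u by (intro mult_left_mono powr_mono2') auto
    also have "\<dots> = u powr (2*a - 2)" by (simp add: powr_add[symmetric])
    finally show "norm (u powr a * (d + u) powr (a - 2)) \<le> norm (u powr (2*a - 2))"
      by simp
  qed
qed

lemma set_integral_powr_kernel_scale:
  fixes a d :: real
  assumes d: "0 < d"
  shows "(LBINT u:{0<..}. u powr a * (d + u) powr (a - 2)) =
    d powr (2*a - 1) * (LBINT u:{0<..}. u powr a * (1 + u) powr (a - 2))"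
proof -
  have kernel: "indicator {0<..} (d * u) * ((d * u) powr a * (d + d * u) powr (a - 2)) =
      d powr (2*a - 2) * (indicator {0<..} u * (u powr a * (1 + u) powr (a - 2)))" for u :: real
  proof (cases "0 < u")
    case True
    have "(d + d * u) powr (a - 2) = d powr (a - 2) * (1 + u) powr (a - 2)"
      using d True by (simp add: powr_mult[symmetric] algebra_simps)
    moreover have "d powr a * d powr (a - 2) = d powr (2*a - 2)"
      by (simp add: powr_add[symmetric])
    ultimately show ?thesis
      using d True by (simp add: powr_mult zero_less_mult_iff)
  qed (use d in \<open>simp add: zero_less_mult_iff\<close>)
  have "(LBINT u:{0<..}. u powr a * (d + u) powr (a - 2)) =
      \<bar>d\<bar> *\<^sub>R (\<integral>u. indicator {0<..} (0 + d * u) *\<^sub>R ((0 + d * u) powr a * (d + (0 + d * u)) powr (a - 2)) \<partial>lborel)"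
    unfolding set_lebesgue_integral_def
    by (rule lborel_integral_real_affine) (use d in auto)
  also have "\<dots> = d * d powr (2*a - 2) * (LBINT u:{0<..}. u powr a * (1 + u) powr (a - 2))"
    using d unfolding set_lebesgue_integral_def by (simp add: kernel)
  also have "d * d powr (2*a - 2) = d powr (2*a - 1)"
    using d by (simp add: powr_add[symmetric] powr_diff power2_eq_square)
  finally show ?thesis .
qed

lemma integral_powr_kernel_eq_tail:
  fixes a d x :: real
  assumes a: "0 < a" "a < 1/2" and d: "0 < d" and x: "0 < x"
  shows "integral {0..x} (\<lambda>u. u powr a * (d + u) powr (a - 2)) =
    d powr (2*a - 1) * (LBINT u:{0<..}. u powr a * (1 + u) powr (a - 2))
    - (LBINT u:{x<..}. u powr a * (d + u) powr (a - 2))"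
proof -
  define f where "f u = u powr a * (d + u) powr (a - 2)" for u :: real
  have head: "set_integrable lborel {0..x} f"
    unfolding f_def using a d
    by (intro borel_integrable_atLeastAtMost' continuous_intros continuous_on_powr') auto
  have tail: "set_integrable lborel {x<..} f"
    using set_integrable_powr_kernel_tail[OF a less_imp_le[OF d] x] unfolding f_def
    by (rule set_integrable_subset) auto
  have "(LBINT u:{0<..}. f u) = (LBINT u:{0..}. f u)"
    unfolding set_lebesgue_integral_def
    by (rule Bochner_Integration.integral_cong) (use a in \<open>auto simp: f_def indicator_def\<close>)
  also have "{0..} = {0..x} \<union> {x<..}"
    using x by auto
  also have "(LBINT u:{0..x} \<union> {x<..}. f u) = (LBINT u:{0..x}. f u) + (LBINT u:{x<..}. f u)"
    by (rule set_integral_Un[OF _ head tail]) auto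
  also have "(LBINT u:{0..x}. f u) = integral {0..x} f"
    by (rule set_borel_integral_eq_integral[OF head])
  finally show ?thesis
    using set_integral_powr_kernel_scale[OF d, of a] unfolding f_def by simp
qed

lemma RLcov_eq_integral:
  fixes H r s :: real
  assumes "1/2 < H" "0 < r" "r \<le> s"
  shows "RLcov H r s = integral {0..r} (\<lambda>v. (r - v) powr (H - 1/2) * (s - v) powr (H - 1/2))"
proof -
  have "continuous_on {0..r} (\<lambda>v. (r - v) powr (H - 1/2) * (s - v) powr (H - 1/2))"
    using assms by (intro continuous_intros continuous_on_powr') auto
  from set_borel_integral_eq_integral(2)[OF borel_integrable_atLeastAtMost'[OF this]]
  show ?thesis
    unfolding RLcov_def using assms by (simp add: min_def)
qed

lemma RLcov_has_real_derivative_second: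
  fixes H r s :: real
  assumes H: "1/2 < H" and r: "0 < r" "r < s"
  shows "((\<lambda>s'. RLcov H r s') has_real_derivative
    (H - 1/2) * integral {0..r} (\<lambda>v. (r - v) powr (H - 1/2) * (s - v) powr (H - 3/2))) (at s)"
proof -
  define a where "a = H - 1/2"
  have a: "0 < a"
    using H by (simp add: a_def)
  have exponents: "H - 1/2 = a" "H - 3/2 = a - 1"
    by (simp_all add: a_def)
  define m where "m = (r + s) / 2"
  have m: "r < m" "m < s"
    using r by (simp_all add: m_def)
  define U where "U = {m<..}"
  have U: "open U" "convex U" "s \<in> U" "\<And>x. x \<in> U \<Longrightarrow> r < x"
    using m by (auto simp: U_def)
  have "((\<lambda>x. integral (cbox 0 r) (\<lambda>v. (r - v) powr a * (x - v) powr a)) has_field_derivative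
      integral (cbox 0 r) (\<lambda>v. a * ((r - v) powr a * (s - v) powr (a - 1)))) (at s within U)"
  proof (rule leibniz_rule_field_derivative)
    fix x v assume "x \<in> U" "v \<in> cbox 0 r"
    then have "0 < x - v"
      using U(4)[of x] by (auto simp: cbox_interval)
    then show "((\<lambda>x. (r - v) powr a * (x - v) powr a) has_field_derivative
        a * ((r - v) powr a * (x - v) powr (a - 1))) (at x within U)"
      by (auto intro!: derivative_eq_intros)
  next
    fix x assume "x \<in> U"
    then have "continuous_on (cbox 0 r) (\<lambda>v. (r - v) powr a * (x - v) powr a)"
      using a U(4)[of x] by (auto simp: cbox_interval intro!: continuous_intros continuous_on_powr')
    then show "(\<lambda>v. (r - v) powr a * (x - v) powr a) integrable_on cbox 0 r"
      by (rule integrable_continuous)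
  next
    show "continuous_on (U \<times> cbox 0 r) (\<lambda>(x, v). a * ((r - v) powr a * (x - v) powr (a - 1)))"
      using a r(1) m(1) unfolding U_def
      by (auto simp: cbox_interval split_beta intro!: continuous_intros continuous_on_powr')
  qed (use U in auto)
  then have "((\<lambda>x. integral {0..r} (\<lambda>v. (r - v) powr a * (x - v) powr a)) has_real_derivative
      a * integral {0..r} (\<lambda>v. (r - v) powr a * (s - v) powr (a - 1))) (at s)"
    unfolding cbox_interval at_within_open[OF U(3,1)] by simp
  then show ?thesis
    unfolding exponents
  proof (rule has_field_derivative_transform_within_open[OF _ U(1,3)])
    fix x assume "x \<in> U"
    then show "integral {0..r} (\<lambda>v. (r - v) powr a * (x - v) powr a) = RLcov H r x"
      using RLcov_eq_integral[OF H r(1), of x] U(4)[of x] by (simp add: exponents)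
  qed
qed

lemma rescaled_kernel_has_real_derivative:
  fixes a b r s :: real
  assumes a: "0 < a" and r: "0 < r" "r < s"
  shows "((\<lambda>x. integral {0..1} (\<lambda>t. x powr (a + 1) * (1 - t) powr a * (s - x * t) powr b))
    has_real_derivative
      integral {0..1} (\<lambda>t. (a + 1) * r powr a * (1 - t) powr a * (s - r * t) powr b
        - b * t * r powr (a + 1) * (1 - t) powr a * (s - r * t) powr (b - 1))) (at r)"
proof -
  define U where "U = {r/2<..<s}"
  have U: "open U" "convex U" "r \<in> U"
    using r by (auto simp: U_def)
  have base_pos: "0 < s - x * t" if "x \<in> U" "t \<in> {0..1}" for x t
  proof -
    have "x * t \<le> x"
      using that r by (auto simp: U_def mult_left_le)
    then show ?thesis
      using that by (auto simp: U_def)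
  qed
  have "((\<lambda>x. integral (cbox 0 1) (\<lambda>t. x powr (a + 1) * (1 - t) powr a * (s - x * t) powr b))
    has_field_derivative
      integral (cbox 0 1) (\<lambda>t. (a + 1) * r powr a * (1 - t) powr a * (s - r * t) powr b
        - b * t * r powr (a + 1) * (1 - t) powr a * (s - r * t) powr (b - 1))) (at r within U)"
  proof (rule leibniz_rule_field_derivative)
    fix x t :: real assume x: "x \<in> U" and t: "t \<in> cbox 0 1"
    have "0 < x" "0 < s - x * t"
      using x t r base_pos[of x t] by (auto simp: U_def cbox_interval)
    then show "((\<lambda>x. x powr (a + 1) * (1 - t) powr a * (s - x * t) powr b)
        has_field_derivative (a + 1) * x powr a * (1 - t) powr a * (s - x * t) powr b
          - b * t * x powr (a + 1) * (1 - t) powr a * (s - x * t) powr (b - 1)) (at x within U)"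
      by (auto intro!: derivative_eq_intros simp: algebra_simps)
  next
    fix x assume x: "x \<in> U"
    then have "continuous_on (cbox 0 1) (\<lambda>t. x powr (a + 1) * (1 - t) powr a * (s - x * t) powr b)"
      using a r x unfolding U_def
      by (auto simp: cbox_interval intro!: continuous_intros continuous_on_powr')
        (smt (verit) mult_left_le)+
    then show "(\<lambda>t. x powr (a + 1) * (1 - t) powr a * (s - x * t) powr b) integrable_on cbox 0 1"
      by (rule integrable_continuous)
  next
    show "continuous_on (U \<times> cbox 0 1) (\<lambda>(x, t). (a + 1) * x powr a * (1 - t) powr a * (s - x * t) powr b
        - b * t * x powr (a + 1) * (1 - t) powr a * (s - x * t) powr (b - 1))"
      using a r unfolding U_def
      by (auto simp: cbox_interval split_beta intro!: continuous_intros continuous_on_powr')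
        (smt (verit) mult_left_le)+
  qed (use U in auto)
  then show ?thesis
    unfolding cbox_interval at_within_open[OF U(3,1)] .
qed

lemma integral_rescaled_kernel_derivative:
  fixes a b r s :: real
  assumes a: "0 < a" and r: "0 < r" "r < s"
  shows "integral {0..1} (\<lambda>t. (a + 1) * r powr a * (1 - t) powr a * (s - r * t) powr b
      - b * t * r powr (a + 1) * (1 - t) powr a * (s - r * t) powr (b - 1))
    = r powr a * s powr b
      - b * integral {0..1} (\<lambda>t. r powr (a + 1) * (1 - t) powr a * (s - r * t) powr (b - 1))"
proof -
  define \<Phi> where "\<Phi> t = - ((1 - t) powr (a + 1) * (s - r * t) powr b)" for t :: real
  define \<phi> where "\<phi> t = (a + 1) * (1 - t) powr a * (s - r * t) powr b
    + b * r * (1 - t) powr (a + 1) * (s - r * t) powr (b - 1)" for t :: real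
  define q where "q t = r powr (a + 1) * (1 - t) powr a * (s - r * t) powr (b - 1)" for t :: real
  have rt_less: "r * t < s" if "t \<le> 1" for t
  proof -
    have "r * t \<le> r"
      using r that by (simp add: mult_le_cancel_left1)
    then show ?thesis
      using r by linarith
  qed
  have "(\<phi> has_integral (\<Phi> 1 - \<Phi> 0)) {0..1}"
  proof (rule fundamental_theorem_of_calculus_interior)
    show "continuous_on {0..1} \<Phi>"
      unfolding \<Phi>_def using a
      by (auto intro!: continuous_intros continuous_on_powr' simp: rt_less less_imp_le)
        (metis rt_less less_irrefl)
  next
    fix t :: real assume "t \<in> {0<..<1}"
    then have "0 < 1 - t" "0 < s - r * t"
      using rt_less[of t] by auto
    then show "(\<Phi> has_vector_derivative \<phi> t) (at t)"
      unfolding \<Phi>_def \<phi>_def has_real_derivative_iff_has_vector_derivative[symmetric]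
      by (auto intro!: derivative_eq_intros simp: algebra_simps)
  qed simp
  moreover have "\<Phi> 1 - \<Phi> 0 = s powr b"
    using a by (simp add: \<Phi>_def)
  moreover have "continuous_on {0..1} q"
    unfolding q_def using a
    by (auto intro!: continuous_intros continuous_on_powr' simp: rt_less less_imp_le)
      (metis rt_less less_irrefl)
  ultimately have "((\<lambda>t. r powr a * \<phi> t - b * q t) has_integral r powr a * s powr b - b * integral {0..1} q) {0..1}"
    by (intro has_integral_diff has_integral_mult_right integrable_integral integrable_continuous_real) simp_all
  moreover have "r powr a * \<phi> t - b * q t = (a + 1) * r powr a * (1 - t) powr a * (s - r * t) powr b
      - b * t * r powr (a + 1) * (1 - t) powr a * (s - r * t) powr (b - 1)" if "t \<in> {0..1}" for t
  proof -
    have split_powers: "(1 - t) powr (a + 1) = (1 - t) powr a * (1 - t)" "r powr (a + 1) = r powr a * r"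
      using that r by (simp_all add: powr_add)
    show ?thesis
      unfolding \<phi>_def q_def split_powers by (simp add: algebra_simps)
  qed
  ultimately have "((\<lambda>t. (a + 1) * r powr a * (1 - t) powr a * (s - r * t) powr b
      - b * t * r powr (a + 1) * (1 - t) powr a * (s - r * t) powr (b - 1))
      has_integral r powr a * s powr b - b * integral {0..1} q) {0..1}"
    by (rule has_integral_eq[rotated])
  then show ?thesis
    unfolding q_def by (rule integral_unique)
qed

lemma rescaled_kernel_eq_shifted_integral:
  fixes a b r s :: real
  assumes a: "0 < a" and r: "0 < r" "r < s"
  shows "integral {0..1} (\<lambda>t. r powr (a + 1) * (1 - t) powr a * (s - r * t) powr b)
    = integral {0..r} (\<lambda>u. u powr a * (s - r + u) powr b)"
proof -
  have "integral {0..1} (\<lambda>t. r powr (a + 1) * (1 - t) powr a * (s - r * t) powr b)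
      = integral {0..r} (\<lambda>v. (r - v) powr a * (s - v) powr b)"
    by (rule integral_powr_kernel_rescale[OF a r, symmetric])
  also have "\<dots> = integral {0..r} (\<lambda>u. u powr a * (s - r + u) powr b)"
    using integral_reflect_atLeastAtMost[of 0 r "\<lambda>u. u powr a * (s - r + u) powr b"]
    by (simp add: algebra_simps)
  finally show ?thesis .
qed

lemma deriv_RLcov_has_real_derivative:
  fixes H r s :: real
  assumes H: "1/2 < H" and r: "0 < r" "r < s"
  shows "((\<lambda>r'. deriv (\<lambda>s'. RLcov H r' s') s) has_real_derivative
    (H - 1/2) * (r powr (H - 1/2) * s powr (H - 3/2)
      - (H - 3/2) * integral {0..r} (\<lambda>u. u powr (H - 1/2) * (s - r + u) powr (H - 5/2)))) (at r)"
proof -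
  define a where "a = H - 1/2"
  have a: "0 < a"
    using H by (simp add: a_def)
  have exponents: "H - 1/2 = a" "H - 3/2 = a - 1" "H - 5/2 = a - 1 - 1"
    by (simp_all add: a_def)
  define I where "I x = integral {0..1} (\<lambda>t. x powr (a + 1) * (1 - t) powr a * (s - x * t) powr (a - 1))"
    for x
  have deriv_eq: "a * I x = deriv (\<lambda>s'. RLcov H x s') s" if "x \<in> {0<..<s}" for x
    using DERIV_imp_deriv[OF RLcov_has_real_derivative_second[OF H, of x s]]
      integral_powr_kernel_rescale[OF a, of x s] that
    unfolding I_def exponents by simp
  have "((\<lambda>x. a * I x) has_real_derivative a *
      integral {0..1} (\<lambda>t. (a + 1) * r powr a * (1 - t) powr a * (s - r * t) powr (a - 1)
        - (a - 1) * t * r powr (a + 1) * (1 - t) powr a * (s - r * t) powr (a - 1 - 1))) (at r)"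
    unfolding I_def by (intro DERIV_cmult rescaled_kernel_has_real_derivative a r)
  then have "((\<lambda>r'. deriv (\<lambda>s'. RLcov H r' s') s) has_real_derivative a *
      integral {0..1} (\<lambda>t. (a + 1) * r powr a * (1 - t) powr a * (s - r * t) powr (a - 1)
        - (a - 1) * t * r powr (a + 1) * (1 - t) powr a * (s - r * t) powr (a - 1 - 1))) (at r)"
    by (rule has_field_derivative_transform_within_open[of _ _ _ "{0<..<s}"]) (use r deriv_eq in auto)
  then show ?thesis
    unfolding exponents integral_rescaled_kernel_derivative[OF a r]
      rescaled_kernel_eq_shifted_integral[OF a r] .
qed

theorem lemmaA1:
  fixes H r s c1 c2 c3 :: real
  assumes "1/2 < H" "H < 1"
    and "c1 = H - 1/2"
    and "c3 = (H - 1/2) * (H - 3/2)"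
    and "c2 = - c3 * (LBINT u:{0<..}. u powr (H - 1/2) * (1 + u) powr (H - 5/2))"
    and "0 < r" "r < s"
  shows "(\<forall>\<^sub>F r' in nhds r. (\<lambda>s'. RLcov H r' s') differentiable (at s))
    \<and> ((\<lambda>r'. deriv (\<lambda>s'. RLcov H r' s') s) has_real_derivative
         (c1 * r powr (H - 1/2) * s powr (H - 3/2) + c2 * (s - r) powr (2*H - 2)
          + c3 * (LBINT v:{r<..}. v powr (H - 1/2) * (s - r + v) powr (H - 5/2)))) (at r)"
proof
  have "\<forall>\<^sub>F r' in nhds r. r' \<in> {0<..<s}"
    using assms(6,7) by (intro eventually_nhds_in_open) auto
  then show "\<forall>\<^sub>F r' in nhds r. (\<lambda>s'. RLcov H r' s') differentiable (at s)"
  proof eventually_elim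
    case (elim r')
    then show ?case
      using RLcov_has_real_derivative_second[OF assms(1), of r' s]
      by (auto intro: differentiableI has_field_derivative_imp_has_derivative)
  qed
  define K where "K = (LBINT u:{0<..}. u powr (H - 1/2) * (1 + u) powr (H - 5/2))"
  define L where "L = (LBINT v:{r<..}. v powr (H - 1/2) * (s - r + v) powr (H - 5/2))"
  have tail: "integral {0..r} (\<lambda>u. u powr (H - 1/2) * (s - r + u) powr (H - 5/2))
      = (s - r) powr (2*H - 2) * K - L"
    using integral_powr_kernel_eq_tail[of "H - 1/2" "s - r" r] assms(1,2,6,7)
    unfolding K_def L_def by (simp add: algebra_simps)
  have "c1 * r powr (H - 1/2) * s powr (H - 3/2) + c2 * (s - r) powr (2*H - 2) + c3 * L
      = (H - 1/2) * (r powr (H - 1/2) * s powr (H - 3/2) - (H - 3/2) * ((s - r) powr (2*H - 2) * K - L))"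
    unfolding assms(3-5) K_def[symmetric] by (simp add: algebra_simps)
  with deriv_RLcov_has_real_derivative[OF assms(1,6,7)]
  show "((\<lambda>r'. deriv (\<lambda>s'. RLcov H r' s') s) has_real_derivative
      (c1 * r powr (H - 1/2) * s powr (H - 3/2) + c2 * (s - r) powr (2*H - 2)
       + c3 * (LBINT v:{r<..}. v powr (H - 1/2) * (s - r + v) powr (H - 5/2)))) (at r)"
    unfolding tail L_def[symmetric] by simp
qed

end
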